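(* Let $\chi:\mathrm{SO}_n\to\mathfrak{so}_n$ be smooth with $\chi(gAg^T)=g\chi(A)g^T$ for all $A,g\in\mathrm{SO}_n$. Then: (i) there exists a $2\pi$-periodic $\tau=(\tau_k)_{k=1}^p:\mathcal T\to\mathbb R^p$ with $\chi(A_\Theta)=\sum_{k=1}^p\tau_k(\Theta)F_{2k-1\,2k}$ for all $\Theta\in\mathcal T$, and $\tau\circ W=W\circ\tau$ for all $W\in\mathfrak W$; (ii) for every $A\in\mathrm{SO}_n$ and every $(g,\Theta)\in\mathrm{SO}_n\times\mathcal T$ with $A=gA_\Theta g^T$, $\chi(A)=\sum_{k=1}^p\tau_k(\Theta)\,gF_{2k-1\,2k}g^T$.
   Context: Let $n\ge3$, $\mathrm{SO}_n$ the rotation group, $\mathfrak{so}_n$ the skew-symmetric matrices; $F_{ij}\in\mathfrak{so}_n$ has entries $(F_{ij})_{k\ell}=\delta_{ik}\delta_{j\ell}-\delta_{i\ell}\delta_{jk}$. $p=\lfloor n/2\rfloor$; $\mathcal T=[-\pi,\pi)^p$ viewed as the torus. $R_\theta=\begin{pmatrix}\cos\theta&-\sin\theta\\\sin\theta&\cos\theta\end{pmatrix}$; for $\Theta=(\theta_1,\dots,\theta_p)$, $A_\Theta$ is block diagonal with blocks $R_{\theta_1},\dots,R_{\theta_p}$ (and a final entry $1$ if $n=2p+1$). The Weyl group $\mathfrak W$ acts linearly on $\mathbb R^p$: for $n=2p$ it is generated by coordinate transpositions $\theta_i\leftrightarrow\theta_j$ and sign changes of pairs $(\theta_i,\theta_j)\mapsto(-\theta_i,-\theta_j)$,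 $i<j$; for $n=2p+1$ by coordinate transpositions and single sign changes $\theta_i\mapsto-\theta_i$. *)

theory Defs
  imports "HOL-Analysis.Analysis"
begin

type_synonym 'n rmat = "((real, 'n) vec, 'n) vec"

text \<open>The dimension n is CARD('n); the basis is ordered by the enumeration of the
  index type 'n: position k (0-based) corresponds to the basis vector e_(k+1).\<close>

definition pos :: "'n::enum \<Rightarrow> nat" where
  "pos x = (LEAST k. k < length (Enum.enum :: 'n list) \<and> Enum.enum ! k = x)"

definition SO_mat :: "('n::finite rmat) set" where
  "SO_mat = {A. rotation_matrix A}"

definition so_mat :: "('n::finite rmat) set" where
  "so_mat = {X. transpose X = - X}"

text \<open>F_ij with 0-based indices i j: (F_ij)_kl = d_ik d_jl - d_il d_jk.
  The paper's F_(2k-1,2k) (1-based, k = 1..p) is Fmat (2k) (2k+1) here with k = 0..p-1.\<close>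
definition Fmat :: "nat \<Rightarrow> nat \<Rightarrow> ('n::enum) rmat" where
  "Fmat i j = (\<chi> r c. (if pos r = i \<and> pos c = j then 1 else 0)
                      - (if pos r = j \<and> pos c = i then 1 else 0))"

text \<open>Angle vectors Theta in R^p are represented as functions nat => real vanishing
  outside {..<p}.\<close>
definition angvecs :: "nat \<Rightarrow> (nat \<Rightarrow> real) set" where
  "angvecs p = {\<Theta>. \<forall>k\<ge>p. \<Theta> k = 0}"

definition torus :: "nat \<Rightarrow> (nat \<Rightarrow> real) set" where
  "torus p = {\<Theta> \<in> angvecs p. \<forall>k<p. -pi \<le> \<Theta> k \<and> \<Theta> k < pi}"

text \<open>Entries of the block diagonal matrix A_Theta (0-based indices); block k occupies
  rows/columns 2k, 2k+1 for k < p; the remaining diagonal entry (n odd) is 1.\<close>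
definition rot_entry :: "nat \<Rightarrow> (nat \<Rightarrow> real) \<Rightarrow> nat \<Rightarrow> nat \<Rightarrow> real" where
  "rot_entry p \<Theta> i j =
     (if i div 2 = j div 2 \<and> i div 2 < p then
        (let k = i div 2 in
          if i = j then cos (\<Theta> k)
          else if i = 2*k \<and> j = 2*k+1 then - sin (\<Theta> k)
          else sin (\<Theta> k))
      else if i = j then 1 else 0)"

definition A_rot :: "(nat \<Rightarrow> real) \<Rightarrow> ('n::enum) rmat" where
  "A_rot \<Theta> = (\<chi> r c. rot_entry (CARD('n) div 2) \<Theta> (pos r) (pos c))"

definition swap_coords :: "nat \<Rightarrow> nat \<Rightarrow> (nat \<Rightarrow> real) \<Rightarrow> (nat \<Rightarrow> real)" where
  "swap_coords i j \<Theta> = (\<lambda>k. if k = i then \<Theta> j else if k = j then \<Theta> i else \<Theta> k)"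

definition sign1 :: "nat \<Rightarrow> (nat \<Rightarrow> real) \<Rightarrow> (nat \<Rightarrow> real)" where
  "sign1 i \<Theta> = (\<lambda>k. if k = i then - \<Theta> k else \<Theta> k)"

definition sign2 :: "nat \<Rightarrow> nat \<Rightarrow> (nat \<Rightarrow> real) \<Rightarrow> (nat \<Rightarrow> real)" where
  "sign2 i j \<Theta> = (\<lambda>k. if k = i \<or> k = j then - \<Theta> k else \<Theta> k)"

definition weyl_gens :: "nat \<Rightarrow> ((nat \<Rightarrow> real) \<Rightarrow> (nat \<Rightarrow> real)) set" where
  "weyl_gens n =
     {swap_coords i j | i j. i < j \<and> j < n div 2} \<union>
     (if even n then {sign2 i j | i j. i < j \<and> j < n div 2}
      else {sign1 i | i. i < n div 2})"

text \<open>The group generated by the generators (they are involutions and the group is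
  finite, so closure under composition with generators gives the generated group).\<close>
inductive_set weyl_group :: "nat \<Rightarrow> ((nat \<Rightarrow> real) \<Rightarrow> (nat \<Rightarrow> real)) set" for n where
  weyl_id: "id \<in> weyl_group n"
| weyl_comp: "W \<in> weyl_group n \<Longrightarrow> G \<in> weyl_gens n \<Longrightarrow> G \<circ> W \<in> weyl_group n"

fun Ck_on :: "nat \<Rightarrow> 'a::real_normed_vector set \<Rightarrow> ('a \<Rightarrow> 'b::real_normed_vector) \<Rightarrow> bool" where
  "Ck_on 0 U f = continuous_on U f"
| "Ck_on (Suc k) U f =
     (\<exists>f'. (\<forall>x\<in>U. (f has_derivative f' x) (at x)) \<and> (\<forall>v. Ck_on k U (\<lambda>x. f' x v)))"

definition smooth_on_open :: "'a::real_normed_vector set \<Rightarrow> ('a \<Rightarrow> 'b::real_normed_vector) \<Rightarrow> bool" where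
  "smooth_on_open U f \<longleftrightarrow> open U \<and> (\<forall>k. Ck_on k U f)"

definition smooth_on_set :: "'a::real_normed_vector set \<Rightarrow> ('a \<Rightarrow> 'b::real_normed_vector) \<Rightarrow> bool" where
  "smooth_on_set S f \<longleftrightarrow> (\<exists>U F. S \<subseteq> U \<and> smooth_on_open U F \<and> (\<forall>x\<in>S. F x = f x))"

end

theory Submission
  imports Defs
begin

text \<open>The commutant of the maximal torus inside so_n: conjugating by the diagonal sign
  matrix that is -1 exactly on one 2x2 block fixes every A_Theta, hence by equivariance
  fixes chi(A_Theta), which kills all entries of chi(A_Theta) linking that block to the
  rest. Skew-symmetry then leaves one free entry per block, tau_k(Theta). Each generator
  of the Weyl group is realised by a signed permutation matrix in SO_n (a pair of sign
  flips, or a swap of two blocks) that conjugates A_Theta to A_(W Theta); equivariance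
  transports this to tau. Part (ii) is equivariance once more.\<close>

definition enum_nth :: "nat \<Rightarrow> 'n::enum" where
  "enum_nth m = Enum.enum ! m"

lemma pos_less_card [simp]: "pos (x::'n::enum) < CARD('n)"
  and enum_nth_pos [simp]: "enum_nth (pos x) = x"
proof -
  have len: "length (Enum.enum :: 'n list) = CARD('n)"
    by (simp add: card_UNIV_length_enum)
  have "x \<in> set (Enum.enum :: 'n list)"
    by (simp add: UNIV_enum[symmetric])
  then obtain k where "k < length (Enum.enum :: 'n list) \<and> Enum.enum ! k = x"
    by (metis in_set_conv_nth)
  then have "pos x < length (Enum.enum :: 'n list) \<and> Enum.enum ! pos x = x"
    unfolding pos_def by (rule LeastI)
  then show "pos x < CARD('n)" "enum_nth (pos x) = x"
    by (simp_all add: len enum_nth_def)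
qed

lemma pos_enum_nth [simp]: "m < CARD('n::enum) \<Longrightarrow> pos (enum_nth m :: 'n) = m"
  unfolding pos_def enum_nth_def
proof (rule Least_equality)
  assume m: "m < CARD('n)"
  have len: "length (Enum.enum :: 'n list) = CARD('n)"
    by (simp add: card_UNIV_length_enum)
  show "m < length (Enum.enum :: 'n list) \<and> Enum.enum ! m = (Enum.enum ! m :: 'n)"
    using m len by simp
  fix y assume "y < length (Enum.enum :: 'n list) \<and> Enum.enum ! y = (Enum.enum ! m :: 'n)"
  then show "m \<le> y"
    using enum_distinct m len nth_eq_iff_index_eq by (metis order.refl)
qed

lemma enum_nth_eq_iff:
  "a < CARD('n::enum) \<Longrightarrow> b < CARD('n) \<Longrightarrow> (enum_nth a :: 'n) = enum_nth b \<longleftrightarrow> a = b"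
  by (metis pos_enum_nth)

lemma bij_betw_enum_nth: "bij_betw (enum_nth :: nat \<Rightarrow> 'n::enum) {..<CARD('n)} UNIV"
  unfolding bij_betw_def inj_on_def
  by (auto simp: enum_nth_eq_iff) (metis enum_nth_pos pos_less_card image_eqI lessThan_iff)

lemma sum_UNIV_enum_nth: "(\<Sum>r\<in>UNIV. f r) = (\<Sum>a<CARD('n::enum). f (enum_nth a :: 'n))"
  by (rule sum.reindex_bij_betw[OF bij_betw_enum_nth, symmetric])

lemma prod_UNIV_enum_nth: "(\<Prod>r\<in>UNIV. f r) = (\<Prod>a<CARD('n::enum). f (enum_nth a :: 'n))"
  by (rule prod.reindex_bij_betw[OF bij_betw_enum_nth, symmetric])

definition mat_entry :: "('n::enum) rmat \<Rightarrow> nat \<Rightarrow> nat \<Rightarrow> real" where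
  "mat_entry M i j = M $ enum_nth i $ enum_nth j"

lemma mat_eq_entryI:
  "(\<And>i j. i < CARD('n) \<Longrightarrow> j < CARD('n) \<Longrightarrow> mat_entry M i j = mat_entry N i j)
    \<Longrightarrow> M = (N::'n::enum rmat)"
  unfolding mat_entry_def vec_eq_iff by (metis enum_nth_pos pos_less_card)

lemma mat_entry_mult:
  "mat_entry (M ** N) i j = (\<Sum>a<CARD('n::enum). mat_entry M i a * mat_entry (N::'n rmat) a j)"
  unfolding mat_entry_def matrix_matrix_mult_def by (simp add: sum_UNIV_enum_nth)

lemma mat_entry_transpose [simp]: "mat_entry (transpose M) i j = mat_entry M j i"
  unfolding mat_entry_def transpose_def by simp

lemma mat_entry_mat_1:
  "i < CARD('n::enum) \<Longrightarrow> j < CARD('n) \<Longrightarrow> mat_entry (mat 1 :: 'n rmat) i j = (if i = j then 1 else 0)"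
  unfolding mat_entry_def mat_def by (simp add: enum_nth_eq_iff)

lemma mat_entry_scaleR [simp]: "mat_entry (c *\<^sub>R M) i j = c * mat_entry M i j"
  unfolding mat_entry_def by simp

lemma mat_entry_uminus [simp]: "mat_entry (- M) i j = - mat_entry M i j"
  unfolding mat_entry_def by simp

lemma mat_entry_sum: "mat_entry (\<Sum>k\<in>S. f k) i j = (\<Sum>k\<in>S. mat_entry (f k) i j)"
  unfolding mat_entry_def by (induction S rule: infinite_finite_induct) auto

lemma mat_entry_A_rot:
  "i < CARD('n::enum) \<Longrightarrow> j < CARD('n)
    \<Longrightarrow> mat_entry (A_rot \<Theta> :: 'n rmat) i j = rot_entry (CARD('n) div 2) \<Theta> i j"
  unfolding mat_entry_def A_rot_def by simp

lemma mat_entry_Fmat: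
  "i < CARD('n::enum) \<Longrightarrow> j < CARD('n) \<Longrightarrow>
    mat_entry (Fmat k l :: 'n rmat) i j = (if i = k \<and> j = l then 1 else 0) - (if i = l \<and> j = k then 1 else 0)"
  unfolding mat_entry_def Fmat_def by simp

lemma matrix_mult_scaleR_left: "(c *\<^sub>R (A::real^'n^'m)) ** (B::real^'p^'n) = c *\<^sub>R (A ** B)"
  by (vector matrix_matrix_mult_def sum_distrib_left mult.assoc)

lemma matrix_mult_scaleR_right: "(A::real^'n^'m) ** (c *\<^sub>R (B::real^'p^'n)) = c *\<^sub>R (A ** B)"
  by (vector matrix_matrix_mult_def sum_distrib_left mult.left_commute)

lemma matrix_add_rdistrib: "((A::real^'n^'m) + B) ** (C::real^'p^'n) = A ** C + B ** C"
  by (vector matrix_matrix_mult_def sum.distrib[symmetric] field_simps)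

lemma matrix_conj_linear_combination:
  "finite S \<Longrightarrow> (g::real^'n^'n) ** (\<Sum>k\<in>S. c k *\<^sub>R M k) ** (h::real^'n^'n)
     = (\<Sum>k\<in>S. c k *\<^sub>R (g ** M k ** h))"
  by (induction S rule: finite_induct)
     (simp_all add: matrix_add_ldistrib matrix_add_rdistrib matrix_mult_scaleR_left matrix_mult_scaleR_right)

lemma rot_entry_block:
  assumes "q < p"
  shows "rot_entry p \<Theta> (2*q) (2*q) = cos (\<Theta> q)"
    "rot_entry p \<Theta> (2*q) (2*q+1) = - sin (\<Theta> q)"
    "rot_entry p \<Theta> (2*q+1) (2*q) = sin (\<Theta> q)"
    "rot_entry p \<Theta> (2*q+1) (2*q+1) = cos (\<Theta> q)"
  using assms by (simp_all add: rot_entry_def)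

lemma rot_entry_off_block: "i div 2 \<noteq> j div 2 \<Longrightarrow> rot_entry p \<Theta> i j = 0"
  by (auto simp: rot_entry_def)

lemma div_2_eq_cases: "(i::nat) div 2 = q \<Longrightarrow> i = 2*q \<or> i = 2*q+1"
  by auto

lemma rot_entry_mult:
  assumes "p = n div 2" and "i < n"
  shows "(\<Sum>a<n. rot_entry p \<Theta> i a * rot_entry p \<Phi> a j) = rot_entry p (\<lambda>k. \<Theta> k + \<Phi> k) i j"
proof (cases "i div 2 < p")
  case True
  define q where "q = i div 2"
  have q: "q < p" "2*q+1 < n"
    using True assms unfolding q_def by linarith+
  have "(\<Sum>a<n. rot_entry p \<Theta> i a * rot_entry p \<Phi> a j)
      = (\<Sum>a\<in>{2*q, 2*q+1}. rot_entry p \<Theta> i a * rot_entry p \<Phi> a j)"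
    by (rule sum.mono_neutral_right)
       (use q in \<open>auto simp: q_def rot_entry_off_block\<close>)
  also have "\<dots> = rot_entry p \<Theta> i (2*q) * rot_entry p \<Phi> (2*q) j
      + rot_entry p \<Theta> i (2*q+1) * rot_entry p \<Phi> (2*q+1) j"
    by simp
  also have "\<dots> = rot_entry p (\<lambda>k. \<Theta> k + \<Phi> k) i j"
  proof (cases "j div 2 = q")
    case True
    with div_2_eq_cases[OF q_def[symmetric]] div_2_eq_cases[OF True] show ?thesis
      by (elim disjE; simp only: rot_entry_block[OF q(1)])
         (simp_all add: sin_add cos_add algebra_simps)
  next
    case False
    then show ?thesis
      by (simp add: rot_entry_off_block q_def)
  qed
  finally show ?thesis .
next
  case False
  then have unit_row: "\<And>\<Psi> a. rot_entry p \<Psi> i a = (if i = a then 1 else 0)"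
    by (auto simp: rot_entry_def)
  have "(\<Sum>a<n. rot_entry p \<Theta> i a * rot_entry p \<Phi> a j)
      = (\<Sum>a<n. if a = i then rot_entry p \<Phi> a j else 0)"
    by (rule sum.cong) (auto simp: unit_row)
  also have "\<dots> = rot_entry p (\<lambda>k. \<Theta> k + \<Phi> k) i j"
    using \<open>i < n\<close> by (simp add: unit_row)
  finally show ?thesis .
qed

lemma rot_entry_transpose: "rot_entry p \<Theta> j i = rot_entry p (\<lambda>k. - \<Theta> k) i j"
proof (cases "i div 2 = j div 2 \<and> i div 2 < p")
  case True
  define q where "q = i div 2"
  have q: "q < p"
    using True q_def by simp
  have "j div 2 = q"
    using True q_def by simp
  with div_2_eq_cases[OF q_def[symmetric]] div_2_eq_cases[OF this] show ?thesis
    by (elim disjE; simp only: rot_entry_block[OF q]) simp_all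
next
  case False
  then show ?thesis
    unfolding rot_entry_def by auto
qed

lemma A_rot_mult: "A_rot \<Theta> ** A_rot \<Phi> = (A_rot (\<lambda>k. \<Theta> k + \<Phi> k) :: 'n::enum rmat)"
proof (rule mat_eq_entryI)
  fix i j assume ij: "i < CARD('n)" "j < CARD('n)"
  have "mat_entry (A_rot \<Theta> ** A_rot \<Phi> :: 'n rmat) i j
      = (\<Sum>a<CARD('n). rot_entry (CARD('n) div 2) \<Theta> i a * rot_entry (CARD('n) div 2) \<Phi> a j)"
    unfolding mat_entry_mult by (rule sum.cong) (simp_all add: mat_entry_A_rot ij)
  also have "\<dots> = rot_entry (CARD('n) div 2) (\<lambda>k. \<Theta> k + \<Phi> k) i j"
    by (rule rot_entry_mult[OF refl ij(1)])
  finally show "mat_entry (A_rot \<Theta> ** A_rot \<Phi> :: 'n rmat) i j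
      = mat_entry (A_rot (\<lambda>k. \<Theta> k + \<Phi> k) :: 'n rmat) i j"
    by (simp add: mat_entry_A_rot ij)
qed

lemma transpose_A_rot: "transpose (A_rot \<Theta>) = (A_rot (\<lambda>k. - \<Theta> k) :: 'n::enum rmat)"
proof (rule mat_eq_entryI)
  fix i j assume "i < CARD('n)" "j < CARD('n)"
  then show "mat_entry (transpose (A_rot \<Theta>) :: 'n rmat) i j = mat_entry (A_rot (\<lambda>k. - \<Theta> k) :: 'n rmat) i j"
    by (simp only: mat_entry_transpose mat_entry_A_rot rot_entry_transpose[of _ \<Theta> j i])
qed

lemma A_rot_zero: "(A_rot (\<lambda>k. 0) :: 'n::enum rmat) = mat 1"
  by (rule mat_eq_entryI) (simp add: mat_entry_A_rot mat_entry_mat_1 rot_entry_def Let_def)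

lemma orthogonal_matrix_A_rot: "orthogonal_matrix (A_rot \<Theta> :: 'n::enum rmat)"
  unfolding orthogonal_matrix transpose_A_rot A_rot_mult by (simp add: A_rot_zero)

text \<open>A_Theta is the square of A_(Theta/2), so its determinant is a square, hence +1.\<close>
lemma A_rot_in_SO: "(A_rot \<Theta> :: 'n::enum rmat) \<in> SO_mat"
proof -
  define H where "H = (\<lambda>k. \<Theta> k / 2)"
  have "(A_rot \<Theta> :: 'n rmat) = A_rot H ** A_rot H"
    by (simp add: A_rot_mult H_def)
  then have "det (A_rot \<Theta> :: 'n rmat) = det (A_rot H :: 'n rmat) * det (A_rot H :: 'n rmat)"
    by (simp add: det_mul)
  moreover have "det (A_rot H :: 'n rmat) = 1 \<or> det (A_rot H :: 'n rmat) = -1"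
    by (rule det_orthogonal_matrix[OF orthogonal_matrix_A_rot])
  ultimately have "det (A_rot \<Theta> :: 'n rmat) = 1"
    by auto
  then show ?thesis
    unfolding SO_mat_def rotation_matrix_def using orthogonal_matrix_A_rot by simp
qed

lemma A_rot_add_2pi:
  "(A_rot (\<lambda>l. if l = k then \<Theta> l + 2 * pi else \<Theta> l) :: 'n::enum rmat) = A_rot \<Theta>"
  by (rule mat_eq_entryI) (auto simp: mat_entry_A_rot rot_entry_def Let_def)

definition signed_perm_mat :: "(nat \<Rightarrow> nat) \<Rightarrow> (nat \<Rightarrow> real) \<Rightarrow> 'n::enum rmat" where
  "signed_perm_mat \<sigma> s = (\<chi> r c. if pos c = \<sigma> (pos r) then s (pos r) else 0)"

definition signed_involution :: "nat \<Rightarrow> (nat \<Rightarrow> nat) \<Rightarrow> (nat \<Rightarrow> real) \<Rightarrow> bool" where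
  "signed_involution n \<sigma> s \<longleftrightarrow> (\<forall>a<n. \<sigma> a < n \<and> \<sigma> (\<sigma> a) = a \<and> s a * s a = 1)"

lemma mat_entry_signed_perm_mat:
  "i < CARD('n::enum) \<Longrightarrow> j < CARD('n)
    \<Longrightarrow> mat_entry (signed_perm_mat \<sigma> s :: 'n rmat) i j = (if j = \<sigma> i then s i else 0)"
  unfolding mat_entry_def signed_perm_mat_def by simp

lemma mat_entry_signed_perm_conj:
  assumes inv: "signed_involution CARD('n::enum) \<sigma> s"
    and i: "i < CARD('n)" and j: "j < CARD('n)"
  shows "mat_entry (signed_perm_mat \<sigma> s ** M ** transpose (signed_perm_mat \<sigma> s) :: 'n rmat) i j
    = s i * s j * mat_entry M (\<sigma> i) (\<sigma> j)"
proof -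
  let ?P = "signed_perm_mat \<sigma> s :: 'n rmat"
  have \<sigma>: "\<sigma> i < CARD('n)" "\<sigma> j < CARD('n)"
    using inv i j unfolding signed_involution_def by auto
  have row: "mat_entry (?P ** M) i b = s i * mat_entry M (\<sigma> i) b" for b
  proof -
    have "mat_entry (?P ** M) i b = (\<Sum>a<CARD('n). if a = \<sigma> i then s i * mat_entry M (\<sigma> i) b else 0)"
      unfolding mat_entry_mult by (rule sum.cong) (auto simp: mat_entry_signed_perm_mat i)
    then show ?thesis
      using \<sigma> by simp
  qed
  have "mat_entry (?P ** M ** transpose ?P) i j
      = (\<Sum>b<CARD('n). if b = \<sigma> j then s i * mat_entry M (\<sigma> i) (\<sigma> j) * s j else 0)"
    unfolding mat_entry_mult[of "?P ** M"]
    by (rule sum.cong) (auto simp: row mat_entry_signed_perm_mat j)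
  then show ?thesis
    using \<sigma> by simp
qed

lemma orthogonal_matrix_signed_perm_mat:
  assumes inv: "signed_involution CARD('n::enum) \<sigma> s"
  shows "orthogonal_matrix (signed_perm_mat \<sigma> s :: 'n rmat)"
proof -
  let ?P = "signed_perm_mat \<sigma> s :: 'n rmat"
  have "?P ** transpose ?P = mat 1"
  proof (rule mat_eq_entryI)
    fix i j assume i: "i < CARD('n)" and j: "j < CARD('n)"
    have \<sigma>: "\<sigma> i < CARD('n)" "\<sigma> (\<sigma> i) = i" "\<sigma> (\<sigma> j) = j" "s i * s i = 1"
      using inv i j unfolding signed_involution_def by auto
    have "mat_entry (?P ** transpose ?P) i j
        = (\<Sum>c<CARD('n). if c = \<sigma> i then (if \<sigma> i = \<sigma> j then s i * s j else 0) else 0)"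
      unfolding mat_entry_mult by (rule sum.cong) (auto simp: mat_entry_signed_perm_mat i j)
    also have "\<dots> = (if \<sigma> i = \<sigma> j then s i * s j else 0)"
      using \<sigma> by simp
    also have "\<dots> = (if i = j then 1 else 0)"
      using \<sigma> by metis
    finally show "mat_entry (?P ** transpose ?P) i j = mat_entry (mat 1 :: 'n rmat) i j"
      using i j by (simp add: mat_entry_mat_1)
  qed
  then show ?thesis
    unfolding orthogonal_matrix using matrix_left_right_inverse by blast
qed

text \<open>Only one permutation contributes to the Leibniz expansion of the determinant.\<close>
lemma det_signed_perm_mat:
  assumes inv: "signed_involution CARD('n::enum) \<sigma> s"
  shows "det (signed_perm_mat \<sigma> s :: 'n rmat)
    = of_int (sign (\<lambda>r::'n. enum_nth (\<sigma> (pos r)) :: 'n)) * (\<Prod>a<CARD('n). s a)"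
proof -
  let ?P = "signed_perm_mat \<sigma> s :: 'n rmat"
  define \<pi> where "\<pi> = (\<lambda>r::'n. enum_nth (\<sigma> (pos r)) :: 'n)"
  have lt: "\<And>r::'n. \<sigma> (pos r) < CARD('n)"
    using inv unfolding signed_involution_def by auto
  have "\<pi> (\<pi> r) = r" for r
    unfolding \<pi>_def using inv lt unfolding signed_involution_def by simp
  then have \<pi>: "\<pi> permutes UNIV"
    by (auto intro: bij_imp_permutes involuntory_imp_bij)
  have zero: "(\<Prod>r\<in>UNIV. ?P $ r $ \<rho> r) = 0" if ne: "\<rho> \<noteq> \<pi>" for \<rho>
  proof -
    obtain r where "\<rho> r \<noteq> \<pi> r"
      using ne by blast
    then have "pos (\<rho> r) \<noteq> \<sigma> (pos r)"
      unfolding \<pi>_def by (metis enum_nth_pos)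
    then have "?P $ r $ \<rho> r = 0"
      unfolding signed_perm_mat_def by simp
    then show ?thesis
      by (meson UNIV_I finite prod_zero)
  qed
  have "det ?P = (\<Sum>\<rho>\<in>{\<rho>. \<rho> permutes (UNIV::'n set)}.
           if \<rho> = \<pi> then of_int (sign \<pi>) * (\<Prod>r\<in>UNIV. ?P $ r $ \<pi> r) else 0)"
    unfolding det_def by (rule sum.cong) (auto simp: zero)
  also have "\<dots> = of_int (sign \<pi>) * (\<Prod>r\<in>UNIV. ?P $ r $ \<pi> r)"
    using \<pi> by simp
  also have "(\<Prod>r\<in>UNIV. ?P $ r $ \<pi> r) = (\<Prod>a<CARD('n). s a)"
    by (simp add: signed_perm_mat_def \<pi>_def lt prod_UNIV_enum_nth)
  finally show ?thesis
    unfolding \<pi>_def .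
qed

definition sign_flip :: "nat \<Rightarrow> nat \<Rightarrow> nat \<Rightarrow> real" where
  "sign_flip x y a = (if a = x then -1 else 1) * (if a = y then -1 else 1)"

lemma sign_flip_square: "sign_flip x y a * sign_flip x y a = 1"
  by (simp add: sign_flip_def)

lemma signed_involution_sign_flip: "signed_involution n id (sign_flip x y)"
  unfolding signed_involution_def by (simp add: sign_flip_square)

lemma sign_flip_in_SO:
  assumes "x \<noteq> y" "x < CARD('n::enum)" "y < CARD('n)"
  shows "(signed_perm_mat id (sign_flip x y) :: 'n rmat) \<in> SO_mat"
proof -
  have "(\<lambda>r::'n. enum_nth (id (pos r)) :: 'n) = id"
    by (simp add: fun_eq_iff)
  moreover have "(\<Prod>a<CARD('n). sign_flip x y a)
      = (\<Prod>a<CARD('n). if a = x then -1 else 1) * (\<Prod>a<CARD('n). if a = y then -1 else 1)"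
    unfolding sign_flip_def by (rule prod.distrib)
  ultimately have "det (signed_perm_mat id (sign_flip x y) :: 'n rmat) = 1"
    using assms by (simp add: det_signed_perm_mat[OF signed_involution_sign_flip] prod.delta)
  then show ?thesis
    unfolding SO_mat_def rotation_matrix_def
    using orthogonal_matrix_signed_perm_mat[OF signed_involution_sign_flip] by simp
qed

definition block_transpose :: "nat \<Rightarrow> nat \<Rightarrow> nat \<Rightarrow> nat" where
  "block_transpose a b x = 2 * Transposition.transpose a b (x div 2) + x mod 2"

lemma block_transpose_eq:
  "a \<noteq> b \<Longrightarrow> block_transpose a b x
    = Transposition.transpose (2*a) (2*b) (Transposition.transpose (2*a+1) (2*b+1) x)"
  unfolding block_transpose_def Transposition.transpose_def
  by (cases "x div 2 = a"; cases "x div 2 = b"; cases "x mod 2 = 0")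
     (use div_mult_mod_eq[of x 2] in auto)

lemma signed_involution_block_transpose:
  assumes "a < CARD('n::enum) div 2" "b < CARD('n) div 2"
  shows "signed_involution CARD('n) (block_transpose a b) (\<lambda>_. 1)"
  unfolding signed_involution_def block_transpose_def Transposition.transpose_def
  using assms div_mult_mod_eq[of _ 2] by auto

lemma transpose_enum_nth:
  "a < CARD('n::enum) \<Longrightarrow> b < CARD('n) \<Longrightarrow> c < CARD('n) \<Longrightarrow>
    Transposition.transpose (enum_nth a :: 'n) (enum_nth b) (enum_nth c)
      = enum_nth (Transposition.transpose a b c)"
  by (simp add: Transposition.transpose_def enum_nth_eq_iff)

text \<open>Swapping two 2x2 blocks is a product of two transpositions, hence has
  determinant +1.\<close>
lemma block_transpose_in_SO:
  assumes ab: "a < b" "b < CARD('n::enum) div 2"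
  shows "(signed_perm_mat (block_transpose a b) (\<lambda>_. 1) :: 'n rmat) \<in> SO_mat"
proof -
  have inv: "signed_involution CARD('n) (block_transpose a b) (\<lambda>_. 1)"
    using ab by (intro signed_involution_block_transpose) auto
  have lt: "2*a < CARD('n)" "2*b < CARD('n)" "2*a+1 < CARD('n)" "2*b+1 < CARD('n)"
    using ab by auto
  define t where "t = Transposition.transpose (enum_nth (2*a) :: 'n) (enum_nth (2*b))"
  define u where "u = Transposition.transpose (enum_nth (2*a+1) :: 'n) (enum_nth (2*b+1))"
  have "(\<lambda>r::'n. enum_nth (block_transpose a b (pos r)) :: 'n) = t \<circ> u"
  proof
    fix r :: 'n
    have u: "Transposition.transpose (2*a+1) (2*b+1) (pos r) < CARD('n)"
      using lt by (simp add: Transposition.transpose_def)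
    have "(t \<circ> u) r = t (u (enum_nth (pos r)))"
      by simp
    also have "\<dots> = t (enum_nth (Transposition.transpose (2*a+1) (2*b+1) (pos r)))"
      unfolding u_def using lt by (subst transpose_enum_nth) auto
    also have "\<dots> = enum_nth (Transposition.transpose (2*a) (2*b)
        (Transposition.transpose (2*a+1) (2*b+1) (pos r)))"
      unfolding t_def using lt u by (subst transpose_enum_nth) auto
    also have "\<dots> = enum_nth (block_transpose a b (pos r))"
      using ab by (simp add: block_transpose_eq)
    finally show "enum_nth (block_transpose a b (pos r)) = (t \<circ> u) r" ..
  qed
  moreover have "sign (t \<circ> u) = 1"
    using lt ab
    by (simp add: t_def u_def sign_compose permutation_swap_id sign_swap_id enum_nth_eq_iff)
  ultimately have "det (signed_perm_mat (block_transpose a b) (\<lambda>_. 1) :: 'n rmat) = 1"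
    using det_signed_perm_mat[OF inv] by simp
  then show ?thesis
    unfolding SO_mat_def rotation_matrix_def using orthogonal_matrix_signed_perm_mat[OF inv] by simp
qed

definition sign_twist :: "(nat \<Rightarrow> real) \<Rightarrow> (nat \<Rightarrow> real) \<Rightarrow> nat \<Rightarrow> real" where
  "sign_twist s \<Theta> = (\<lambda>q. s (2*q) * s (2*q+1) * \<Theta> q)"

lemma rot_entry_sign_twist:
  assumes s: "\<And>a. s a * s a = 1"
  shows "s i * s j * rot_entry p \<Theta> i j = rot_entry p (sign_twist s \<Theta>) i j"
proof (cases "i div 2 = j div 2 \<and> i div 2 < p")
  case True
  define q where "q = i div 2"
  have q: "q < p" "j div 2 = q"
    using True q_def by simp_all
  have pm: "s x = 1 \<or> s x = -1" for x
    using s[of x] by (metis square_eq_1_iff power2_eq_square)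
  from div_2_eq_cases[OF q_def[symmetric]] div_2_eq_cases[OF q(2)] pm[of "2*q"] pm[of "2*q+1"]
  show ?thesis
    by (elim disjE; simp only: rot_entry_block[OF q(1)]) (simp_all add: sign_twist_def)
next
  case False
  then show ?thesis
    using s[of i] unfolding rot_entry_def by auto
qed

lemma A_rot_conj_diag:
  assumes s: "\<And>a. s a * s a = 1"
  shows "signed_perm_mat id s ** A_rot \<Theta> ** transpose (signed_perm_mat id s)
    = (A_rot (sign_twist s \<Theta>) :: 'n::enum rmat)"
proof (rule mat_eq_entryI)
  have inv: "signed_involution CARD('n) id s"
    unfolding signed_involution_def using s by simp
  fix i j assume ij: "i < CARD('n)" "j < CARD('n)"
  show "mat_entry (signed_perm_mat id s ** A_rot \<Theta> ** transpose (signed_perm_mat id s) :: 'n rmat) i j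
      = mat_entry (A_rot (sign_twist s \<Theta>) :: 'n rmat) i j"
    unfolding mat_entry_signed_perm_conj[OF inv ij] id_apply mat_entry_A_rot[OF ij]
    by (rule rot_entry_sign_twist[OF s])
qed

lemma rot_entry_block_perm:
  assumes inj: "inj \<phi>" and pres: "\<And>k. \<phi> k < p \<longleftrightarrow> k < p"
    and \<sigma>: "\<And>a. \<sigma> a = 2 * \<phi> (a div 2) + a mod 2"
  shows "rot_entry p \<Theta> (\<sigma> i) (\<sigma> j) = rot_entry p (\<Theta> \<circ> \<phi>) i j"
proof (cases "i div 2 = j div 2 \<and> i div 2 < p")
  case True
  define q where "q = i div 2"
  have q: "q < p" "\<phi> q < p" "j div 2 = q"
    using True q_def pres by auto
  have "\<sigma> (2*q) = 2 * \<phi> q" "\<sigma> (2*q+1) = 2 * \<phi> q + 1"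
    using \<sigma> by simp_all
  with div_2_eq_cases[OF q_def[symmetric]] div_2_eq_cases[OF q(3)] show ?thesis
    by (elim disjE; simp only: rot_entry_block[OF q(1)] rot_entry_block[OF q(2)]) simp_all
next
  case False
  have div: "\<sigma> a div 2 = \<phi> (a div 2)" "\<sigma> a mod 2 = a mod 2" for a
    using \<sigma> by simp_all
  have "\<sigma> i = \<sigma> j \<longleftrightarrow> i = j"
  proof
    assume "\<sigma> i = \<sigma> j"
    then have "i div 2 = j div 2" "i mod 2 = j mod 2"
      using div inj by (metis injD)+
    then show "i = j"
      by (metis div_mult_mod_eq)
  qed simp
  moreover have "\<not> (\<sigma> i div 2 = \<sigma> j div 2 \<and> \<sigma> i div 2 < p)"
    using False by (simp add: div pres inj_eq[OF inj])
  ultimately show ?thesis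
    using False unfolding rot_entry_def by (simp only: if_False)
qed

lemma swap_coords_eq: "swap_coords a b \<Theta> = \<Theta> \<circ> Transposition.transpose a b"
  by (simp add: fun_eq_iff swap_coords_def Transposition.transpose_def)

lemma A_rot_conj_block_transpose:
  assumes ab: "a < b" "b < CARD('n::enum) div 2"
  shows "signed_perm_mat (block_transpose a b) (\<lambda>_. 1) ** A_rot \<Theta>
      ** transpose (signed_perm_mat (block_transpose a b) (\<lambda>_. 1))
    = (A_rot (swap_coords a b \<Theta>) :: 'n rmat)"
proof (rule mat_eq_entryI)
  have inv: "signed_involution CARD('n) (block_transpose a b) (\<lambda>_. 1)"
    using ab by (intro signed_involution_block_transpose) auto
  have pres: "Transposition.transpose a b k < CARD('n) div 2 \<longleftrightarrow> k < CARD('n) div 2" for k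
    using ab by (auto simp: Transposition.transpose_def)
  fix i j assume ij: "i < CARD('n)" "j < CARD('n)"
  then have bt: "block_transpose a b i < CARD('n)" "block_transpose a b j < CARD('n)"
    using inv unfolding signed_involution_def by auto
  show "mat_entry (signed_perm_mat (block_transpose a b) (\<lambda>_. 1) ** A_rot \<Theta>
      ** transpose (signed_perm_mat (block_transpose a b) (\<lambda>_. 1)) :: 'n rmat) i j
    = mat_entry (A_rot (swap_coords a b \<Theta>) :: 'n rmat) i j"
    unfolding mat_entry_signed_perm_conj[OF inv ij] mat_entry_A_rot[OF bt] mat_entry_A_rot[OF ij]
      swap_coords_eq mult_1_left
    by (rule rot_entry_block_perm[OF inj_transpose pres block_transpose_def])
qed

lemma A_rot_cong: "(\<And>k. k < CARD('n::enum) div 2 \<Longrightarrow> \<Theta> k = \<Psi> k) \<Longrightarrow> (A_rot \<Theta> :: 'n rmat) = A_rot \<Psi>"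
  by (rule mat_eq_entryI) (auto simp: mat_entry_A_rot rot_entry_def Let_def)

definition torus_coords :: "'n::enum rmat \<Rightarrow> nat \<Rightarrow> real" where
  "torus_coords X k = (if k < CARD('n) div 2 then mat_entry X (2*k) (2*k+1) else 0)"

lemma torus_coords_conj_diag:
  assumes s: "\<And>a. s a * s a = 1"
  shows "torus_coords (signed_perm_mat id s ** X ** transpose (signed_perm_mat id s) :: 'n::enum rmat)
    = sign_twist s (torus_coords X)"
proof
  have inv: "signed_involution CARD('n) id s"
    unfolding signed_involution_def using s by simp
  fix k
  show "torus_coords (signed_perm_mat id s ** X ** transpose (signed_perm_mat id s) :: 'n rmat) k
      = sign_twist s (torus_coords X) k"
  proof (cases "k < CARD('n) div 2")
    case True
    then have "2*k+1 < CARD('n)"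
      by linarith
    with True show ?thesis
      by (simp add: torus_coords_def sign_twist_def mat_entry_signed_perm_conj[OF inv])
  qed (simp add: torus_coords_def sign_twist_def)
qed

lemma torus_coords_conj_block_transpose:
  assumes ab: "a < b" "b < CARD('n::enum) div 2"
  shows "torus_coords (signed_perm_mat (block_transpose a b) (\<lambda>_. 1) ** X
      ** transpose (signed_perm_mat (block_transpose a b) (\<lambda>_. 1)) :: 'n rmat)
    = swap_coords a b (torus_coords X)"
proof
  have inv: "signed_involution CARD('n) (block_transpose a b) (\<lambda>_. 1)"
    using ab by (intro signed_involution_block_transpose) auto
  fix k
  let ?t = "Transposition.transpose a b k"
  show "torus_coords (signed_perm_mat (block_transpose a b) (\<lambda>_. 1) ** X
      ** transpose (signed_perm_mat (block_transpose a b) (\<lambda>_. 1)) :: 'n rmat) k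
    = swap_coords a b (torus_coords X) k"
  proof (cases "k < CARD('n) div 2")
    case True
    then have "2*k+1 < CARD('n)" "?t < CARD('n) div 2"
      using ab by (auto simp: Transposition.transpose_def)
    with True show ?thesis
      by (simp add: torus_coords_def swap_coords_eq mat_entry_signed_perm_conj[OF inv]
          block_transpose_def)
  next
    case False
    then have "?t = k"
      using ab by (auto simp: Transposition.transpose_def)
    with False show ?thesis
      by (simp add: torus_coords_def swap_coords_eq)
  qed
qed

text \<open>For a single sign change (n odd) the second sign flip needed for determinant +1 is
  put on the last coordinate, which lies in no block.\<close>
lemma weyl_gen_realization:
  assumes "G \<in> weyl_gens CARD('n)"
  obtains g :: "'n::enum rmat" where "g \<in> SO_mat"
    and "\<And>\<Theta>. g ** A_rot \<Theta> ** transpose g = A_rot (G \<Theta>)"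
    and "\<And>X. torus_coords (g ** X ** transpose g) = G (torus_coords X)"
proof -
  define p where "p = CARD('n) div 2"
  from assms consider (swap) a b where "G = swap_coords a b" "a < b" "b < p"
    | (pair) a b where "G = sign2 a b" "a < b" "b < p"
    | (single) a where "odd CARD('n)" "G = sign1 a" "a < p"
    unfolding weyl_gens_def p_def by (auto split: if_splits)
  then show thesis
  proof cases
    case swap
    then show thesis
      using block_transpose_in_SO A_rot_conj_block_transpose torus_coords_conj_block_transpose
      by (metis that p_def)
  next
    case pair
    let ?s = "sign_flip (2*a) (2*b)"
    have twist: "sign_twist ?s = sign2 a b"
      using pair by (auto simp: fun_eq_iff sign_twist_def sign_flip_def sign2_def)
    show thesis
    proof (rule that)
      show "(signed_perm_mat id ?s :: 'n rmat) \<in> SO_mat"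
        using pair p_def by (intro sign_flip_in_SO) auto
    qed (simp_all add: pair(1) twist[symmetric] A_rot_conj_diag torus_coords_conj_diag sign_flip_square)
  next
    case single
    let ?s = "sign_flip (2*a) (2*p)"
    have twist: "q \<noteq> p \<Longrightarrow> sign_twist ?s \<Theta> q = sign1 a \<Theta> q" for \<Theta> q
      using single by (auto simp: sign_twist_def sign_flip_def sign1_def)
    have A_rot_twist: "A_rot (sign_twist ?s \<Theta>) = (A_rot (sign1 a \<Theta>) :: 'n rmat)" for \<Theta>
      by (rule A_rot_cong, rule twist) (simp add: p_def)
    have coords_twist: "sign_twist ?s (torus_coords (X :: 'n rmat)) = sign1 a (torus_coords X)" for X
    proof
      fix q
      show "sign_twist ?s (torus_coords X) q = sign1 a (torus_coords X) q"
        using twist[of q] single by (cases "q < p") (auto simp: sign_twist_def torus_coords_def sign1_def p_def)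
    qed
    show thesis
    proof (rule that)
      show "(signed_perm_mat id ?s :: 'n rmat) \<in> SO_mat"
        using single p_def by (intro sign_flip_in_SO) presburger+
    qed (simp_all add: single(2) A_rot_twist[symmetric] coords_twist[symmetric]
          A_rot_conj_diag torus_coords_conj_diag sign_flip_square)
  qed
qed

lemma sign_twist_block_flip: "sign_twist (sign_flip (2*k) (2*k+1)) \<Theta> = \<Theta>"
  by (auto simp: fun_eq_iff sign_twist_def sign_flip_def)

lemma A_rot_conj_block_flip:
  "signed_perm_mat id (sign_flip (2*k) (2*k+1)) ** A_rot \<Theta>
      ** transpose (signed_perm_mat id (sign_flip (2*k) (2*k+1)))
    = (A_rot \<Theta> :: 'n::enum rmat)"
  using A_rot_conj_diag[of "sign_flip (2*k) (2*k+1)", OF sign_flip_square]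
  by (simp only: sign_twist_block_flip)

text \<open>Flipping the sign of block k negates exactly the entries linking block k to the
  other coordinates.\<close>
lemma mat_entry_eq_0_off_blocks:
  fixes X :: "'n::enum rmat"
  assumes fixed: "\<And>k. k < CARD('n) div 2 \<Longrightarrow>
      signed_perm_mat id (sign_flip (2*k) (2*k+1)) ** X
        ** transpose (signed_perm_mat id (sign_flip (2*k) (2*k+1))) = X"
    and ij: "i < CARD('n)" "j < CARD('n)" "i div 2 \<noteq> j div 2"
  shows "mat_entry X i j = 0"
proof -
  have "i div 2 \<le> CARD('n) div 2" "j div 2 \<le> CARD('n) div 2"
    using ij by (simp_all add: div_le_mono)
  with ij(3) obtain k where k: "k < CARD('n) div 2" "k = i div 2 \<or> k = j div 2"
    by (metis le_neq_implies_less)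
  let ?s = "sign_flip (2*k) (2*k+1)"
  have "?s i * ?s j = -1"
    using k ij(3) by (auto simp: sign_flip_def)
  moreover have "mat_entry X i j = ?s i * ?s j * mat_entry X i j"
    using mat_entry_signed_perm_conj[OF signed_involution_sign_flip[of _ "2*k" "2*k+1"] ij(1,2),
        where M = X]
    unfolding fixed[OF k(1)] id_apply .
  ultimately show ?thesis
    by simp
qed

lemma mat_entry_sum_Fmat:
  assumes "i < CARD('n::enum)" "j < CARD('n)"
  shows "mat_entry (\<Sum>k<p. t k *\<^sub>R Fmat (2*k) (2*k+1) :: 'n rmat) i j
    = (if i div 2 < p \<and> j div 2 = i div 2 \<and> i < j then t (i div 2)
       else if i div 2 < p \<and> j div 2 = i div 2 \<and> j < i then - t (i div 2) else 0)"
proof -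
  have "mat_entry (\<Sum>k<p. t k *\<^sub>R Fmat (2*k) (2*k+1) :: 'n rmat) i j
      = (\<Sum>k<p. if k = i div 2 then (if j div 2 = i div 2 \<and> i < j then t k
           else if j div 2 = i div 2 \<and> j < i then - t k else 0) else 0)"
    unfolding mat_entry_sum mat_entry_scaleR mat_entry_Fmat[OF assms]
    by (rule sum.cong) auto
  then show ?thesis
    by simp
qed

lemma skew_block_diagonal:
  fixes X :: "'n::enum rmat"
  assumes skew: "transpose X = - X"
    and fixed: "\<And>k. k < CARD('n) div 2 \<Longrightarrow>
      signed_perm_mat id (sign_flip (2*k) (2*k+1)) ** X
        ** transpose (signed_perm_mat id (sign_flip (2*k) (2*k+1))) = X"
  shows "X = (\<Sum>k<CARD('n) div 2. torus_coords X k *\<^sub>R Fmat (2*k) (2*k+1))"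
proof (rule mat_eq_entryI)
  fix i j assume ij: "i < CARD('n)" "j < CARD('n)"
  have antisym: "mat_entry X j i = - mat_entry X i j"
    using arg_cong[OF skew, of "\<lambda>M. mat_entry M i j"] by simp
  define q where "q = i div 2"
  consider "i div 2 \<noteq> j div 2" | "i = j" | "j div 2 = q" "i < j" | "j div 2 = q" "j < i"
    unfolding q_def by linarith
  then show "mat_entry X i j
      = mat_entry (\<Sum>k<CARD('n) div 2. torus_coords X k *\<^sub>R Fmat (2*k) (2*k+1) :: 'n rmat) i j"
  proof cases
    case 1
    then have "mat_entry X i j = 0"
      by (intro mat_entry_eq_0_off_blocks[OF fixed ij])
    with 1 show ?thesis
      unfolding mat_entry_sum_Fmat[OF ij] by simp
  next
    case 2
    then show ?thesis
      using antisym unfolding mat_entry_sum_Fmat[OF ij] by simp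
  next
    case 3
    then have "i = 2*q" "j = 2*q+1" "q < CARD('n) div 2"
      using ij unfolding q_def by auto
    then show ?thesis
      unfolding mat_entry_sum_Fmat[OF ij] by (simp add: torus_coords_def)
  next
    case 4
    then have "j = 2*q" "i = 2*q+1" "q < CARD('n) div 2"
      using ij unfolding q_def by auto
    then show ?thesis
      using antisym unfolding mat_entry_sum_Fmat[OF ij] by (simp add: torus_coords_def)
  qed
qed

locale conj_equivariant =
  fixes chi :: "'n::enum rmat \<Rightarrow> 'n rmat"
  assumes equiv: "\<And>A g. A \<in> SO_mat \<Longrightarrow> g \<in> SO_mat \<Longrightarrow> chi (g ** A ** transpose g) = g ** chi A ** transpose g"
begin

lemma chi_A_rot_conj:
  "g \<in> SO_mat \<Longrightarrow> chi (g ** A_rot \<Theta> ** transpose g) = g ** chi (A_rot \<Theta>) ** transpose g"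
  by (rule equiv[OF A_rot_in_SO])

lemma chi_A_rot_block_diagonal:
  assumes "chi (A_rot \<Theta>) \<in> so_mat"
  shows "chi (A_rot \<Theta>) = (\<Sum>k<CARD('n) div 2. torus_coords (chi (A_rot \<Theta>)) k *\<^sub>R Fmat (2*k) (2*k+1))"
proof (rule skew_block_diagonal)
  show "transpose (chi (A_rot \<Theta>)) = - chi (A_rot \<Theta>)"
    using assms unfolding so_mat_def by simp
  fix k assume "k < CARD('n) div 2"
  then have "signed_perm_mat id (sign_flip (2*k) (2*k+1)) \<in> (SO_mat :: 'n rmat set)"
    by (intro sign_flip_in_SO) auto
  then show "signed_perm_mat id (sign_flip (2*k) (2*k+1)) ** chi (A_rot \<Theta>)
      ** transpose (signed_perm_mat id (sign_flip (2*k) (2*k+1))) = chi (A_rot \<Theta>)"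
    by (metis chi_A_rot_conj A_rot_conj_block_flip)
qed

lemma torus_coords_chi_A_rot_weyl:
  "W \<in> weyl_group CARD('n) \<Longrightarrow> torus_coords (chi (A_rot (W \<Theta>))) = W (torus_coords (chi (A_rot \<Theta>)))"
proof (induction arbitrary: \<Theta> rule: weyl_group.induct)
  case (weyl_comp W G)
  obtain g :: "'n rmat" where g: "g \<in> SO_mat"
    and A_rot_g: "\<And>\<Theta>. g ** A_rot \<Theta> ** transpose g = A_rot (G \<Theta>)"
    and coords_g: "\<And>X. torus_coords (g ** X ** transpose g) = G (torus_coords X)"
    using weyl_gen_realization[OF weyl_comp.hyps(2)] by blast
  have "torus_coords (chi (A_rot (G (W \<Theta>))))
      = torus_coords (g ** chi (A_rot (W \<Theta>)) ** transpose g)"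
    by (simp only: A_rot_g[symmetric] chi_A_rot_conj[OF g])
  also have "\<dots> = G (W (torus_coords (chi (A_rot \<Theta>))))"
    by (simp only: coords_g weyl_comp.IH)
  finally show ?case
    by simp
qed simp

end

theorem proposition6p2:
  fixes chi :: "('n::enum) rmat \<Rightarrow> 'n rmat"
  defines "n \<equiv> CARD('n::enum)"
  defines "p \<equiv> CARD('n::enum) div 2"
  assumes n3: "n \<ge> 3"
    and smooth: "smooth_on_set SO_mat chi"
    and into_so: "\<forall>A\<in>SO_mat. chi A \<in> so_mat"
    and equiv: "\<forall>A\<in>SO_mat. \<forall>g\<in>SO_mat. chi (g ** A ** transpose g) = g ** chi A ** transpose g"
  shows "\<exists>\<tau> :: (nat \<Rightarrow> real) \<Rightarrow> (nat \<Rightarrow> real).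
           (\<forall>\<Theta>\<in>angvecs p. \<tau> \<Theta> \<in> angvecs p)
         \<and> (\<forall>\<Theta>\<in>angvecs p. \<forall>k<p. \<tau> (\<lambda>l. if l = k then \<Theta> l + 2 * pi else \<Theta> l) = \<tau> \<Theta>)
         \<and> (\<forall>\<Theta>\<in>torus p. chi (A_rot \<Theta>) = (\<Sum>k<p. \<tau> \<Theta> k *\<^sub>R Fmat (2*k) (2*k+1)))
         \<and> (\<forall>W\<in>weyl_group n. \<forall>\<Theta>\<in>angvecs p. \<tau> (W \<Theta>) = W (\<tau> \<Theta>))
         \<and> (\<forall>A\<in>SO_mat. \<forall>g\<in>SO_mat. \<forall>\<Theta>\<in>torus p. A = g ** A_rot \<Theta> ** transpose g \<longrightarrow>
              chi A = (\<Sum>k<p. \<tau> \<Theta> k *\<^sub>R (g ** Fmat (2*k) (2*k+1) ** transpose g)))"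
proof -
  interpret conj_equivariant chi
    using equiv by unfold_locales blast
  define \<tau> where "\<tau> \<Theta> = torus_coords (chi (A_rot \<Theta>))" for \<Theta>
  have block_form: "chi (A_rot \<Theta>) = (\<Sum>k<p. \<tau> \<Theta> k *\<^sub>R Fmat (2*k) (2*k+1))" for \<Theta>
    unfolding \<tau>_def p_def using into_so A_rot_in_SO by (blast intro: chi_A_rot_block_diagonal)
  have conj_form: "chi (g ** A_rot \<Theta> ** transpose g)
      = (\<Sum>k<p. \<tau> \<Theta> k *\<^sub>R (g ** Fmat (2*k) (2*k+1) ** transpose g))" if "g \<in> SO_mat" for g \<Theta>
    unfolding chi_A_rot_conj[OF that] block_form[of \<Theta>]
    by (rule matrix_conj_linear_combination) simp
  show ?thesis
  proof (intro exI[of _ \<tau>] conjI ballI allI impI)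
    show "\<tau> \<Theta> \<in> angvecs p" for \<Theta>
      unfolding angvecs_def \<tau>_def torus_coords_def p_def by simp
    show "\<tau> (\<lambda>l. if l = k then \<Theta> l + 2 * pi else \<Theta> l) = \<tau> \<Theta>" for \<Theta> k
      unfolding \<tau>_def A_rot_add_2pi ..
    show "\<tau> (W \<Theta>) = W (\<tau> \<Theta>)" if "W \<in> weyl_group n" for W \<Theta>
      using that unfolding \<tau>_def n_def by (rule torus_coords_chi_A_rot_weyl)
  qed (simp_all add: block_form conj_form)
qed

end
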